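(* There exists an order-reversing embedding $\mathcal{E} \to \mathcal{G}$.
   Context: A pca is a set with a partial binary application operation containing distinct $\mathrm{s},\mathrm{k}$ with $\mathrm{k}ab\downarrow=a$, $\mathrm{s}ab\downarrow$, $\mathrm{s}abc\simeq(ac)(bc)$. An embedding of pcas is an injective map $f$ with: if $ab$ is defined then $f(a)f(b)$ is defined and equals $f(ab)$. $\mathcal{G}$ is $\mathcal{P}(\omega)$ with application $A\cdot B=\{n:\exists u\,(\langle n,u\rangle\in A\wedge D_u\subseteq B)\}$, where $\langle\cdot,\cdot\rangle$ is a bijective computable pairing with $\langle 0,0\rangle=0$ and $D_u$ is the finite set with canonical code $u$. $\mathcal{E}$ is the sub-pca consisting of the c.e. sets. An embedding $f$ is order-reversing if for all $A\subseteq B$ in its domain, $f(B)\subseteq f(A)$. *)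

theory Defs
  imports Main "HOL-Library.Nat_Bijection"
begin

datatype recf = Z | S | Id nat | Cn recf "recf list" | Pr recf recf | Mn recf

inductive eval :: "recf \<Rightarrow> nat list \<Rightarrow> nat \<Rightarrow> bool" where
  eval_Z: "eval Z xs 0"
| eval_S: "eval S (x # xs) (Suc x)"
| eval_Id: "i < length xs \<Longrightarrow> eval (Id i) xs (xs ! i)"
| eval_Cn: "list_all2 (\<lambda>g y. eval g xs y) gs ys \<Longrightarrow> eval f ys z \<Longrightarrow> eval (Cn f gs) xs z"
| eval_Pr0: "eval f xs y \<Longrightarrow> eval (Pr f g) (0 # xs) y"
| eval_PrS: "eval (Pr f g) (n # xs) y \<Longrightarrow> eval g (n # y # xs) z \<Longrightarrow> eval (Pr f g) (Suc n # xs) z"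
| eval_Mn: "eval f (n # xs) 0 \<Longrightarrow> (\<forall>m<n. \<exists>y. eval f (m # xs) (Suc y)) \<Longrightarrow> eval (Mn f) xs n"

definition ce :: "nat set \<Rightarrow> bool" where
  "ce A \<longleftrightarrow> (\<exists>f. A = {x. \<exists>y. eval f [x] y})"

definition computable2 :: "(nat \<Rightarrow> nat \<Rightarrow> nat) \<Rightarrow> bool" where
  "computable2 p \<longleftrightarrow> (\<exists>f. \<forall>x y. eval f [x, y] (p x y))"

text \<open>Canonical finite set with code u: D_u = set_decode u (u = sum of 2^x, x in D_u).\<close>
definition D :: "nat \<Rightarrow> nat set" where "D u = set_decode u"

definition gapp :: "(nat \<Rightarrow> nat \<Rightarrow> nat) \<Rightarrow> nat set \<Rightarrow> nat set \<Rightarrow> nat set" where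
  "gapp pair A B = {n. \<exists>u. pair n u \<in> A \<and> D u \<subseteq> B}"

end

theory Submission
  imports Defs "HOL-Library.Countable_Set"
begin

text \<open>
  Only countability of the c.e. sets matters: the target is all of \<open>\<G>\<close>. For a family \<open>F\<close> of sets indexed by
  naturals, \<open>B \<mapsto> {m. B \<subseteq> F m}\<close> is antitone, injective on every class listed by
  \<open>F\<close>, and turns \<open>A \<cdot> B\<close> into application as soon as
  \<open>F \<langle>n,u\<rangle> \<cdot> (\<Inter>k\<in>D u. F k) \<subseteq> F n\<close> for all \<open>n, u\<close> and every inclusion
  \<open>A \<cdot> B \<subseteq> F n\<close> is witnessed by some \<open>u\<close> with \<open>B \<subseteq> (\<Inter>k\<in>D u. F k)\<close> and
  \<open>A \<subseteq> F \<langle>n,u\<rangle>\<close>. Such an \<open>F\<close> labels \<open>\<langle>0,j\<rangle>\<close> by the \<open>j\<close>-th set of the class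
  (and the node \<open>0 = \<langle>0,0\<rangle>\<close> by \<open>UNIV\<close>) and \<open>\<langle>n,u\<rangle>\<close>, \<open>n \<noteq> 0\<close>, by the largest
  \<open>C\<close> with \<open>C \<cdot> L\<^sub>u \<subseteq> F n\<close>, where \<open>L\<^sub>u\<close> intersects the labels of the nodes
  \<open>\<langle>0,j\<rangle> \<in> D u\<close>; the witness for \<open>B\<close>, the \<open>j\<close>-th set, is the code of \<open>{\<langle>0,j\<rangle>}\<close>.
  The recursion along first coordinates need not be well-founded, so \<open>F\<close> is taken as
  the greatest fixed point of the monotone operator it describes.
\<close>

definition residual :: "(nat \<Rightarrow> nat \<Rightarrow> nat) \<Rightarrow> nat set \<Rightarrow> nat set \<Rightarrow> nat set" where
  "residual P C X = {x. \<forall>a b. x = P a b \<longrightarrow> D b \<subseteq> X \<longrightarrow> a \<in> C}"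

lemma gapp_subset_iff_subset_residual: "gapp P A X \<subseteq> C \<longleftrightarrow> A \<subseteq> residual P C X"
  unfolding gapp_def residual_def by blast

lemma residual_mono: "C \<subseteq> C' \<Longrightarrow> residual P C X \<subseteq> residual P C' X"
  unfolding residual_def by blast

lemma gapp_mono: "A \<subseteq> A' \<Longrightarrow> B \<subseteq> B' \<Longrightarrow> gapp P A B \<subseteq> gapp P A' B'"
  unfolding gapp_def by blast

definition supersets_of :: "(nat \<Rightarrow> nat set) \<Rightarrow> nat set \<Rightarrow> nat set" where
  "supersets_of F B = {m. B \<subseteq> F m}"

lemma supersets_of_antimono: "A \<subseteq> B \<Longrightarrow> supersets_of F B \<subseteq> supersets_of F A"
  unfolding supersets_of_def by blast

lemma inj_on_supersets_of:
  assumes "\<A> \<subseteq> range F"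
  shows "inj_on (supersets_of F) \<A>"
proof (rule inj_onI)
  fix A B assume "A \<in> \<A>" "B \<in> \<A>" and eq: "supersets_of F A = supersets_of F B"
  then obtain i j where "A = F i" "B = F j"
    using assms by blast
  with eq show "A = B"
    unfolding supersets_of_def by blast
qed

lemma supersets_of_gapp:
  assumes app_bound: "\<And>n u. gapp P (F (P n u)) (\<Inter>k\<in>D u. F k) \<subseteq> F n"
    and app_witness: "\<And>n. gapp P A B \<subseteq> F n \<Longrightarrow> \<exists>u. B \<subseteq> (\<Inter>k\<in>D u. F k) \<and> A \<subseteq> F (P n u)"
  shows "supersets_of F (gapp P A B) = gapp P (supersets_of F A) (supersets_of F B)"
proof (rule set_eqI)
  fix n
  have "n \<in> gapp P (supersets_of F A) (supersets_of F B)
      \<longleftrightarrow> (\<exists>u. B \<subseteq> (\<Inter>k\<in>D u. F k) \<and> A \<subseteq> F (P n u))"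
    unfolding gapp_def supersets_of_def by blast
  also have "\<dots> \<longleftrightarrow> gapp P A B \<subseteq> F n"
  proof
    assume "\<exists>u. B \<subseteq> (\<Inter>k\<in>D u. F k) \<and> A \<subseteq> F (P n u)"
    then obtain u where "B \<subseteq> (\<Inter>k\<in>D u. F k)" "A \<subseteq> F (P n u)"
      by blast
    then have "gapp P A B \<subseteq> gapp P (F (P n u)) (\<Inter>k\<in>D u. F k)"
      by (rule gapp_mono[rotated])
    with app_bound show "gapp P A B \<subseteq> F n"
      by blast
  qed (rule app_witness)
  finally show "n \<in> supersets_of F (gapp P A B) \<longleftrightarrow> n \<in> gapp P (supersets_of F A) (supersets_of F B)"
    unfolding supersets_of_def by simp
qed

definition leaf_bound :: "(nat \<Rightarrow> nat \<Rightarrow> nat) \<Rightarrow> (nat \<Rightarrow> nat set) \<Rightarrow> nat \<Rightarrow> nat set" where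
  "leaf_bound P \<rho> u = (\<Inter>j\<in>{j. P 0 j \<in> D u}. \<rho> j)"

definition tree_step ::
    "(nat \<Rightarrow> nat \<Rightarrow> nat) \<Rightarrow> (nat \<Rightarrow> nat set) \<Rightarrow> (nat \<Rightarrow> nat set) \<Rightarrow> nat \<Rightarrow> nat set" where
  "tree_step P \<rho> F m = {x. \<forall>n u. m = P n u \<longrightarrow>
     x \<in> (if n = 0 then \<rho> u else residual P (F n) (leaf_bound P \<rho> u))}"

definition residual_tree :: "(nat \<Rightarrow> nat \<Rightarrow> nat) \<Rightarrow> (nat \<Rightarrow> nat set) \<Rightarrow> nat \<Rightarrow> nat set" where
  "residual_tree P \<rho> = gfp (tree_step P \<rho>)"

lemma mono_tree_step: "mono (tree_step P \<rho>)"
proof (rule monoI, rule le_funI)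
  fix F F' :: "nat \<Rightarrow> nat set" and m
  assume "F \<le> F'"
  then have "residual P (F n) X \<subseteq> residual P (F' n) X" for n X
    by (simp add: le_fun_def residual_mono)
  then show "tree_step P \<rho> F m \<le> tree_step P \<rho> F' m"
    unfolding tree_step_def by fastforce
qed

lemma inj_pair_eq_iff: "inj (case_prod P) \<Longrightarrow> P n u = P n' u' \<longleftrightarrow> n = n' \<and> u = u'"
  using inj_eq[of "case_prod P" "(n, u)" "(n', u')"] by simp

lemma residual_tree_pair:
  assumes "inj (case_prod P)"
  shows "residual_tree P \<rho> (P n u) =
    (if n = 0 then \<rho> u else residual P (residual_tree P \<rho> n) (leaf_bound P \<rho> u))"
proof -
  have "tree_step P \<rho> F (P n u) =
      (if n = 0 then \<rho> u else residual P (F n) (leaf_bound P \<rho> u))" for F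
    unfolding tree_step_def using inj_pair_eq_iff[OF assms] by auto
  then show ?thesis
    unfolding residual_tree_def by (subst gfp_unfold[OF mono_tree_step]) simp
qed

context
  fixes P :: "nat \<Rightarrow> nat \<Rightarrow> nat" and \<rho> :: "nat \<Rightarrow> nat set"
  assumes inj_P: "inj (case_prod P)" and P_0_0: "P 0 0 = 0" and \<rho>_0: "\<rho> 0 = UNIV"
begin

private lemmas tree_pair = residual_tree_pair[OF inj_P, of \<rho>]

lemma range_subset_residual_tree: "range \<rho> \<subseteq> range (residual_tree P \<rho>)"
  using tree_pair[of 0] by (metis image_subsetI rangeI)

lemma residual_tree_app_bound:
  "gapp P (residual_tree P \<rho> (P n u)) (\<Inter>k\<in>D u. residual_tree P \<rho> k) \<subseteq> residual_tree P \<rho> n"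
proof (cases "n = 0")
  case True
  then show ?thesis
    using tree_pair[of 0 0] P_0_0 \<rho>_0 by simp
next
  case False
  have "(\<Inter>k\<in>D u. residual_tree P \<rho> k) \<subseteq> leaf_bound P \<rho> u"
    unfolding leaf_bound_def using tree_pair[of 0] by fastforce
  then have "gapp P (residual_tree P \<rho> (P n u)) (\<Inter>k\<in>D u. residual_tree P \<rho> k)
      \<subseteq> gapp P (residual P (residual_tree P \<rho> n) (leaf_bound P \<rho> u)) (leaf_bound P \<rho> u)"
    using tree_pair[of n u] False by (simp add: gapp_mono)
  also have "\<dots> \<subseteq> residual_tree P \<rho> n"
    by (simp add: gapp_subset_iff_subset_residual)
  finally show ?thesis .
qed

lemma residual_tree_app_witness:
  assumes "B \<in> range \<rho>" and "gapp P A B \<subseteq> residual_tree P \<rho> n"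
  shows "\<exists>u. B \<subseteq> (\<Inter>k\<in>D u. residual_tree P \<rho> k) \<and> A \<subseteq> residual_tree P \<rho> (P n u)"
proof (cases "n = 0")
  case True
  have "D 0 = {}"
    by (simp add: D_def)
  then show ?thesis
    using True tree_pair[of 0 0] \<rho>_0 by (intro exI[of _ 0]) simp
next
  case False
  obtain j where B: "B = \<rho> j"
    using assms(1) by blast
  define u where "u = set_encode {P 0 j}"
  have D_u: "D u = {P 0 j}"
    unfolding u_def D_def by (subst set_encode_inverse) auto
  have "residual_tree P \<rho> (P 0 j) = B" and "leaf_bound P \<rho> u = B"
    using tree_pair[of 0 j] inj_pair_eq_iff[OF inj_P] B D_u
    by (auto simp: leaf_bound_def)
  moreover have "A \<subseteq> residual P (residual_tree P \<rho> n) B"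
    using assms(2) by (simp add: gapp_subset_iff_subset_residual)
  ultimately show ?thesis
    using False D_u tree_pair[of n u] by (intro exI[of _ u]) simp
qed

end

lemma countable_family_antitone_embedding:
  fixes P :: "nat \<Rightarrow> nat \<Rightarrow> nat" and \<A> :: "nat set set"
  assumes "inj (case_prod P)" and "P 0 0 = 0" and "countable \<A>"
  shows "\<exists>f :: nat set \<Rightarrow> nat set. inj_on f \<A>
    \<and> (\<forall>A B. B \<in> \<A> \<longrightarrow> f (gapp P A B) = gapp P (f A) (f B))
    \<and> (\<forall>A B. A \<subseteq> B \<longrightarrow> f B \<subseteq> f A)"
proof -
  define \<rho> where "\<rho> = case_nat UNIV (from_nat_into \<A>)"
  have "A = \<rho> (Suc (to_nat_on \<A> A))" if "A \<in> \<A>" for A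
    using assms(3) that by (simp add: \<rho>_def)
  then have family: "\<A> \<subseteq> range \<rho>"
    by blast
  have \<rho>_0: "\<rho> 0 = UNIV"
    by (simp add: \<rho>_def)
  let ?f = "supersets_of (residual_tree P \<rho>)"
  have "inj_on ?f \<A>"
    using family range_subset_residual_tree[where \<rho> = \<rho>, OF assms(1,2) \<rho>_0]
    by (intro inj_on_supersets_of) blast
  moreover have "?f (gapp P A B) = gapp P (?f A) (?f B)" if "B \<in> \<A>" for A B
  proof -
    have "B \<in> range \<rho>"
      using family that by blast
    then show ?thesis
      by (intro supersets_of_gapp residual_tree_app_bound[where \<rho> = \<rho>, OF assms(1,2) \<rho>_0]
          residual_tree_app_witness[where \<rho> = \<rho>, OF assms(1,2) \<rho>_0])
  qed
  ultimately show ?thesis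
    using supersets_of_antimono by (intro exI[of _ ?f]) blast
qed

instance recf :: countable
  by countable_datatype

lemma countable_ce: "countable {A. ce A}"
proof -
  have "{A. ce A} = range (\<lambda>f. {x. \<exists>y. eval f [x] y})"
    unfolding ce_def by blast
  moreover have "countable (range (\<lambda>f. {x. \<exists>y. eval f [x] y}))"
    by (rule countable_image) (rule countableI_type)
  ultimately show ?thesis
    by simp
qed

theorem theorem7p12:
  fixes pair :: "nat \<Rightarrow> nat \<Rightarrow> nat"
  assumes "bij (case_prod pair)" and "computable2 pair" and "pair 0 0 = 0"
  shows "\<exists>f :: nat set \<Rightarrow> nat set.
           inj_on f {A. ce A}
         \<and> (\<forall>A B. ce A \<longrightarrow> ce B \<longrightarrow> ce (gapp pair A B) \<longrightarrow>
                f (gapp pair A B) = gapp pair (f A) (f B))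
         \<and> (\<forall>A B. ce A \<longrightarrow> ce B \<longrightarrow> A \<subseteq> B \<longrightarrow> f B \<subseteq> f A)"
proof -
  obtain f :: "nat set \<Rightarrow> nat set" where "inj_on f {A. ce A}"
    and "\<forall>A B. B \<in> {A. ce A} \<longrightarrow> f (gapp pair A B) = gapp pair (f A) (f B)"
    and "\<forall>A B. A \<subseteq> B \<longrightarrow> f B \<subseteq> f A"
    using countable_family_antitone_embedding[OF bij_is_inj[OF assms(1)] assms(3) countable_ce]
    by (elim exE conjE)
  then show ?thesis
    by (intro exI[of _ f]) simp
qed

end
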